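(* Let $k$ be a positive integer with $3\mid k$. Then $S_3(k;3)\ge 3k-3$.
   Context: Let $k,r$ be positive integers with $r\mid k$. A solution to $\mathcal{E}$ is a $k$-tuple $(x_1,\dots,x_k)$ of positive integers (not necessarily distinct) with $\sum_{i=1}^{k-1}x_i=x_k$; it lies in $[1,n]$ if all $x_i\in\{1,\dots,n\}$. Given a coloring $\chi$ of $[1,n]$ with colors in $\{0,1,\dots,r-1\}$ (viewed as integers), a solution is $r$-zero-sum if $\sum_{i=1}^k\chi(x_i)\equiv 0\pmod r$. $S_3(k;r)$ denotes the least positive integer $n$ such that every coloring $\chi:[1,n]\to\{0,1,\dots,r-1\}$ admits an $r$-zero-sum solution to $\mathcal{E}$ in $[1,n]$. *)

theory Defs
  imports Main
begin

definition solution_in :: "nat \<Rightarrow> nat \<Rightarrow> (nat \<Rightarrow> nat) \<Rightarrow> bool" where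
  "solution_in k n x \<longleftrightarrow> (\<forall>i\<in>{1..k}. x i \<in> {1..n}) \<and> (\<Sum>i=1..k-1. x i) = x k"

definition zero_sum :: "nat \<Rightarrow> nat \<Rightarrow> (nat \<Rightarrow> nat) \<Rightarrow> (nat \<Rightarrow> nat) \<Rightarrow> bool" where
  "zero_sum k r chi x \<longleftrightarrow> (\<Sum>i=1..k. chi (x i)) mod r = 0"

definition zs_property :: "nat \<Rightarrow> nat \<Rightarrow> nat \<Rightarrow> bool" where
  "zs_property k r n \<longleftrightarrow>
     (\<forall>chi :: nat \<Rightarrow> nat. (\<forall>y\<in>{1..n}. chi y < r) \<longrightarrow>
        (\<exists>x. solution_in k n x \<and> zero_sum k r chi x))"

definition S3 :: "nat \<Rightarrow> nat \<Rightarrow> nat" where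
  "S3 k r = (LEAST n. 0 < n \<and> zs_property k r n)"

end

theory Submission
  imports Defs
begin

text \<open>
  Colour [1, k-1] by y + 2, [k, 2k-3] by 0 or 1 according to whether y = 1 (mod 3), and
  [2k-2, 3k-4] by 2y + 1 (all mod 3). In a solution inside [1, 3k-4] at most one summand
  exceeds k - 1, and in both cases the colour sum is forced to be nonzero mod 3.
  Since S3 is defined by LEAST, the bound also needs some n with the zero-sum property;
  for k \<ge> 6 one of the four multiples (k-3), 3(k-3), 7(k-3), 15(k-3) shares a colour with a
  larger one, which yields the solution (a, a, b, ..., b, 2a + (k-3)b); for k = 3 the value n = 10
  is checked exhaustively.
\<close>

lemma sum_cl_ivl_last:
  "0 < (k::nat) \<Longrightarrow> (\<Sum>i=1..k. f i) = (\<Sum>i=1..k-1. f i) + (f k :: 'a::comm_monoid_add)"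
  by (cases k) (simp_all add: sum.cl_ivl_Suc)

lemma solution_inD:
  assumes "solution_in k n x" and "0 < k"
  shows "x k = sum x {1..k-1}" and "k - 1 \<le> x k" and "x k \<le> n"
    and "\<And>i. i \<in> {1..k-1} \<Longrightarrow> 1 \<le> x i \<and> x i \<le> n"
proof -
  show bounds: "\<And>i. i \<in> {1..k-1} \<Longrightarrow> 1 \<le> x i \<and> x i \<le> n"
    using assms unfolding solution_in_def by auto
  show last: "x k = sum x {1..k-1}" and "x k \<le> n"
    using assms unfolding solution_in_def by auto
  show "k - 1 \<le> x k"
    using sum_bounded_below[of "{1..k-1}" 1 x] bounds unfolding last by simp
qed

lemma solution_in_at_most_one_large:
  assumes sol: "solution_in k n x" and n: "n \<le> 3*k - 4"
    and i: "i \<in> {1..k-1}" and j: "j \<in> {1..k-1}" "j \<noteq> i" and large: "k \<le> x i"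
  shows "x j \<le> k - 1"
proof (rule ccontr)
  assume "\<not> x j \<le> k - 1"
  have "0 < k" using i by auto
  note facts = solution_inD[OF sol this]
  define R where "R = {1..k-1} - {i} - {j}"
  have fin: "finite ({1..k-1} - {i})" by simp
  have j': "j \<in> {1..k-1} - {i}" using j by simp
  have "x k = x i + (x j + sum x R)"
    unfolding facts(1) R_def sum.remove[OF fin j', symmetric] using i by (simp add: sum.remove)
  moreover have "card R = k - 3" using i j unfolding R_def by simp
  moreover have "card R * 1 \<le> sum x R"
    using sum_bounded_below[of R 1 x] facts(4) unfolding R_def by simp
  ultimately show False using facts(3) n \<open>\<not> x j \<le> k - 1\<close> large by linarith
qed

definition extremal_colouring :: "nat \<Rightarrow> nat \<Rightarrow> nat" where
  "extremal_colouring k y =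
     (if y \<le> k - 1 then (y + 2) mod 3
      else if y \<le> 2*k - 3 then (if y mod 3 = 1 then 0 else 1)
      else (2*y + 1) mod 3)"

lemma extremal_colouring_less_3: "extremal_colouring k y < 3"
  unfolding extremal_colouring_def by auto

lemma sum_colours_small:
  assumes "\<And>i. i \<in> A \<Longrightarrow> x i \<le> k - 1"
  shows "(\<Sum>i\<in>A. extremal_colouring k (x i)) mod 3 = (sum x A + 2 * card A) mod 3"
proof -
  have "(\<Sum>i\<in>A. extremal_colouring k (x i)) mod 3 = (\<Sum>i\<in>A. extremal_colouring k (x i) mod 3) mod 3"
    by (rule mod_sum_eq[symmetric])
  also have "\<dots> = (\<Sum>i\<in>A. (x i + 2) mod 3) mod 3"
    using assms by (simp add: extremal_colouring_def cong: sum.cong)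
  also have "\<dots> = (\<Sum>i\<in>A. x i + 2) mod 3"
    by (rule mod_sum_eq)
  also have "(\<Sum>i\<in>A. x i + 2) = sum x A + 2 * card A"
    by (simp only: sum.distrib sum_constant) simp
  finally show ?thesis .
qed

lemma colour_sum_all_small:
  assumes k: "k = 3*m + 3" and "k - 1 \<le> S" and "S \<le> 3*k - 4"
  shows "(S + 2*(k - 1) + extremal_colouring k S) mod 3 \<noteq> 0"
proof -
  have k1: "k - 1 = 3*m + 2" using k by simp
  consider "S = 3*m + 2" | "k \<le> S" "S \<le> 2*k - 3" | "\<not> S \<le> 2*k - 3"
    using assms by linarith
  then show ?thesis
  proof cases
    case 1
    then have "extremal_colouring k S = (S + 2) mod 3"
      using k by (simp add: extremal_colouring_def)
    then show ?thesis unfolding k1 1 by presburger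
  next
    case 2
    then have colour: "extremal_colouring k S = (if S mod 3 = 1 then 0 else 1)"
      using k by (simp add: extremal_colouring_def)
    moreover have "\<And>S::nat. (S + 2*(3*m + 2) + (if S mod 3 = 1 then 0 else 1)) mod 3 \<noteq> 0"
      by presburger
    ultimately show ?thesis unfolding colour k1 by blast
  next
    case 3
    then have colour: "extremal_colouring k S = (2*S + 1) mod 3"
      using k by (simp add: extremal_colouring_def)
    moreover have "\<And>S::nat. (S + 2*(3*m + 2) + (2*S + 1) mod 3) mod 3 \<noteq> 0"
      by presburger
    ultimately show ?thesis unfolding colour k1 by blast
  qed
qed

lemma colour_sum_one_large:
  assumes k: "k = 3*m + 3" and "k \<le> y" and "k - 2 \<le> T" and "y + T \<le> 3*k - 4"
  shows "(extremal_colouring k y + (T + 2*(k - 2)) + extremal_colouring k (y + T)) mod 3 \<noteq> 0"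
proof -
  have k2: "k - 2 = 3*m + 1" using k by simp
  have sum_colour: "extremal_colouring k (y + T) = (2*(y + T) + 1) mod 3"
    using assms by (simp add: extremal_colouring_def)
  show ?thesis
  proof (cases "y \<le> 2*k - 3")
    case True
    then have colour: "extremal_colouring k y = (if y mod 3 = 1 then 0 else 1)"
      using assms by (simp add: extremal_colouring_def)
    moreover have "\<And>y T :: nat. ((if y mod 3 = 1 then 0 else 1) + (T + 2*(3*m + 1))
        + (2*(y + T) + 1) mod 3) mod 3 \<noteq> 0"
      by presburger
    ultimately show ?thesis unfolding colour sum_colour k2 by blast
  next
    case False
    then have y: "y = 6*m + 4" using assms by simp
    have colour: "extremal_colouring k y = (2*y + 1) mod 3"
      using False by (simp add: extremal_colouring_def)
    have "\<And>T :: nat. ((2*(6*m + 4) + 1) mod 3 + (T + 2*(3*m + 1))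
        + (2*((6*m + 4) + T) + 1) mod 3) mod 3 \<noteq> 0"
      by presburger
    then show ?thesis unfolding colour sum_colour k2 unfolding y .
  qed
qed

lemma extremal_colouring_no_zero_sum:
  assumes "3 dvd k" "0 < k" and n: "n \<le> 3*k - 4" and sol: "solution_in k n x"
  shows "\<not> zero_sum k 3 (extremal_colouring k) x"
proof -
  let ?c = "extremal_colouring k"
  define I where "I = {1..k-1}"
  have k: "k = 3*(k div 3 - 1) + 3" using assms(1,2) by (elim dvdE) simp
  have "finite I" and card_I: "card I = k - 1" unfolding I_def by simp_all
  note facts = solution_inD[OF sol \<open>0 < k\<close>, folded I_def]
  have "(\<Sum>i=1..k. ?c (x i)) mod 3 = ((\<Sum>i\<in>I. ?c (x i)) mod 3 + ?c (x k)) mod 3"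
    unfolding I_def sum_cl_ivl_last[OF \<open>0 < k\<close>] by (rule mod_add_left_eq[symmetric])
  also have "\<dots> \<noteq> 0"
  proof (cases "\<exists>j\<in>I. k \<le> x j")
    case False
    then have "\<And>i. i \<in> I \<Longrightarrow> x i \<le> k - 1" by force
    from sum_colours_small[of I x k, OF this]
    have "(\<Sum>i\<in>I. ?c (x i)) mod 3 = (x k + 2*(k - 1)) mod 3"
      unfolding facts(1) card_I .
    then show ?thesis
      using colour_sum_all_small[OF k facts(2)] facts(3) n by (simp add: mod_add_left_eq)
  next
    case True
    then obtain j where j: "j \<in> I" "k \<le> x j" by blast
    define T where "T = sum x (I - {j})"
    have last: "x k = x j + T" unfolding T_def facts(1) using sum.remove[OF \<open>finite I\<close> j(1)] .
    have card: "card (I - {j}) = k - 2" using j(1) card_I by simp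
    have "card (I - {j}) * 1 \<le> T"
      using sum_bounded_below[of "I - {j}" 1 x] facts(4) unfolding T_def by simp
    then have T: "k - 2 \<le> T" using card by simp
    have "x i \<le> k - 1" if "i \<in> I - {j}" for i
      using solution_in_at_most_one_large[OF sol n _ _ _ j(2), of i] that j(1) unfolding I_def by blast
    from sum_colours_small[of "I - {j}" x k, OF this]
    have "(\<Sum>i\<in>I - {j}. ?c (x i)) mod 3 = (T + 2*(k - 2)) mod 3"
      unfolding T_def[symmetric] card .
    then have "((\<Sum>i\<in>I. ?c (x i)) mod 3 + ?c (x k)) mod 3
        = (?c (x j) + (T + 2*(k - 2)) + ?c (x j + T)) mod 3"
      unfolding sum.remove[OF \<open>finite I\<close> j(1)] last by (metis mod_add_left_eq mod_add_right_eq)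
    then show ?thesis
      using colour_sum_one_large[OF k j(2) T] last facts(3) n by simp
  qed
  finally show ?thesis unfolding zero_sum_def .
qed

lemma not_zs_property_below:
  assumes "3 dvd k" "0 < k" "n \<le> 3*k - 4"
  shows "\<not> zs_property k 3 n"
  using extremal_colouring_no_zero_sum[OF assms] extremal_colouring_less_3
  unfolding zs_property_def by blast

lemma zero_sum_solution_of_equal_colours:
  fixes f :: "nat \<Rightarrow> nat"
  assumes k: "3 \<le> k" "3 dvd k" and "1 \<le> a" "1 \<le> b" "b \<le> n" "c \<le> n"
    and c: "c = 2*a + (k - 3)*b" and colour: "f a = f c"
  shows "\<exists>x. solution_in k n x \<and> zero_sum k 3 f x"
proof -
  define x where "x = (\<lambda>i::nat. if i \<le> 2 then a else if i < k then b else c)"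
  have indices: "{1..k-1} = {1, 2} \<union> {3..k-1}" using k by auto
  have "(\<Sum>i=1..k-1. g (x i)) = 2 * g a + (k - 3) * g b" for g :: "nat \<Rightarrow> nat"
  proof -
    have "(\<Sum>i\<in>{3..k-1}. g (x i)) = (\<Sum>i\<in>{3..k-1}. g b)" by (rule sum.cong) (auto simp: x_def)
    then show ?thesis unfolding indices using k by (subst sum.union_disjoint) (auto simp: x_def)
  qed
  from this[of id] this[of f] have sums:
    "(\<Sum>i=1..k-1. x i) = c" "(\<Sum>i=1..k-1. f (x i)) = 2 * f a + (k - 3) * f b"
    using c by simp_all
  have "x k = c" using k by (simp add: x_def)
  have "solution_in k n x"
    unfolding solution_in_def sums \<open>x k = c\<close> using assms by (auto simp: x_def)
  moreover have "(\<Sum>i=1..k. f (x i)) = 3 * f a + (k - 3) * f b"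
    using sum_cl_ivl_last[of k "\<lambda>i. f (x i)"] k(1) unfolding sums \<open>x k = c\<close> colour by simp
  then have "zero_sum k 3 f x"
    unfolding zero_sum_def using k(2) by simp
  ultimately show ?thesis by blast
qed

lemma zs_property_at_15_times:
  assumes k: "6 \<le> k" "3 dvd k"
  shows "zs_property k 3 (15*(k - 3))"
  unfolding zs_property_def
proof (intro allI impI)
  fix f :: "nat \<Rightarrow> nat"
  assume "\<forall>y\<in>{1..15*(k - 3)}. f y < 3"
  then have "f (1*(k - 3)) < 3" "f (3*(k - 3)) < 3" "f (7*(k - 3)) < 3" "f (15*(k - 3)) < 3"
    using k by auto
  then have "f (1*(k - 3)) = f (3*(k - 3)) \<or> f (1*(k - 3)) = f (7*(k - 3))
    \<or> f (1*(k - 3)) = f (15*(k - 3)) \<or> f (3*(k - 3)) = f (7*(k - 3))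
    \<or> f (3*(k - 3)) = f (15*(k - 3)) \<or> f (7*(k - 3)) = f (15*(k - 3))"
    by linarith
  moreover have pair: "\<exists>x. solution_in k (15*(k - 3)) x \<and> zero_sum k 3 f x"
    if "f (u*(k - 3)) = f (v*(k - 3))" "1 \<le> u" "2*u < v" "v \<le> 15" for u v
  proof (rule zero_sum_solution_of_equal_colours[where b = "v - 2*u"])
    obtain d where d: "v = 2*u + d" using \<open>2*u < v\<close> less_imp_add_positive by blast
    have "v*K = 2*(u*K) + K*(v - 2*u)" for K :: nat
      unfolding d by (simp add: algebra_simps)
    then show "v*(k - 3) = 2*(u*(k - 3)) + (k - 3)*(v - 2*u)" .
    show "v - 2*u \<le> 15*(k - 3)" using that k by linarith
  qed (use that k in auto)
  ultimately show "\<exists>x. solution_in k (15*(k - 3)) x \<and> zero_sum k 3 f x"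
    by (elim disjE) (erule pair; simp)+
qed

lemma less_3_cases: "c < (3::nat) \<Longrightarrow> (c = 0 \<Longrightarrow> P) \<Longrightarrow> (c = 1 \<Longrightarrow> P) \<Longrightarrow> (c = 2 \<Longrightarrow> P) \<Longrightarrow> P"
  by linarith

definition schur_pairs_10 :: "(nat \<times> nat) list" where
  "schur_pairs_10 = [(1,1), (1,2), (1,3), (1,4), (1,5), (1,6), (1,7), (1,8), (1,9),
     (2,2), (2,3), (2,4), (2,5), (2,6), (2,7), (2,8), (3,3), (3,4), (3,5), (3,6), (3,7),
     (4,4), (4,5), (4,6), (5,5)]"

lemma schur_pairs_10_zero_sum:
  fixes f :: "nat \<Rightarrow> nat"
  assumes "f 1 < 3" "f 2 < 3" "f 3 < 3" "f 4 < 3" "f 5 < 3"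
    "f 6 < 3" "f 7 < 3" "f 8 < 3" "f 9 < 3" "f 10 < 3"
  shows "\<exists>p\<in>set schur_pairs_10. (f (fst p) + f (snd p) + f (fst p + snd p)) mod 3 = 0"
  using assms unfolding schur_pairs_10_def
  apply simp
  apply (erule less_3_cases; simp?)+
  done

lemma zs_property_3_3_10: "zs_property 3 3 10"
  unfolding zs_property_def
proof (intro allI impI)
  fix f :: "nat \<Rightarrow> nat"
  assume "\<forall>y\<in>{1..10}. f y < 3"
  then obtain a b where ab: "(a, b) \<in> set schur_pairs_10" "(f a + f b + f (a + b)) mod 3 = 0"
    using schur_pairs_10_zero_sum[of f] by fastforce
  then have "1 \<le> a" "1 \<le> b" "a + b \<le> 10" by (auto simp: schur_pairs_10_def)
  define x where "x = (\<lambda>i::nat. if i = 1 then a else if i = 2 then b else a + b)"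
  have indices: "{1..3::nat} = {1, 2, 3}" "{1..3-1::nat} = {1, 2}" by auto
  have "solution_in 3 10 x"
    unfolding solution_in_def indices using \<open>1 \<le> a\<close> \<open>1 \<le> b\<close> \<open>a + b \<le> 10\<close>
    by (simp add: x_def)
  moreover have "zero_sum 3 3 f x"
    unfolding zero_sum_def indices using ab(2) by (simp add: x_def add.assoc)
  ultimately show "\<exists>x. solution_in 3 10 x \<and> zero_sum 3 3 f x" by blast
qed

lemma zs_property_exists:
  assumes "0 < k" "3 dvd k"
  shows "\<exists>n. 0 < n \<and> zs_property k 3 n"
proof (cases "k = 3")
  case True
  then show ?thesis using zs_property_3_3_10 by (intro exI[of _ 10]) simp
next
  case False
  then have "6 \<le> k" using assms by (auto elim!: dvdE)
  then show ?thesis using zs_property_at_15_times[OF _ assms(2)] by (intro exI[of _ "15*(k - 3)"]) simp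
qed

theorem theorem4:
  fixes k :: nat
  assumes "0 < k" and "3 dvd k"
  shows "S3 k 3 \<ge> 3 * k - 3"
proof -
  have "zs_property k 3 (S3 k 3)"
    using LeastI_ex[OF zs_property_exists[OF assms]] unfolding S3_def by blast
  then show ?thesis using not_zs_property_below[OF assms(2,1), of "S3 k 3"] by linarith
qed

end
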